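(* Let $m \equiv 1 \pmod 4$ with $m \ge 5$, $n = 3^m - 1$, $v = (3^{(m+1)/2}-1)/2$ and $\delta = (3^{(m-1)/2}+5)/2$. Then $\gcd(v,n) = 1$, and, setting $T_{(0,3,m)}(v) = \{ vi \bmod n : i \in T_{(0,3,m)}\}$, we have $\{1, 2, \ldots, \delta-1\} \subseteq T_{(0,3,m)}(v)$.
   Context: For an integer $0 \le j \le n-1$ with $3$-adic expansion $j = \sum_{t=0}^{m-1} j_t 3^t$, $j_t \in \{0,1,2\}$, let $w_3(j) = \sum_{t=0}^{m-1} j_t$. For distinct $i_1,i_2 \in \{0,1,2,3\}$, $T_{(i_1,i_2,m)} = \{1 \le j \le n-1 : w_3(j) \equiv i_1 \text{ or } i_2 \pmod 4\}$. For an integer $b$, $b \bmod n$ is the unique $b_0 \in \{0,\ldots,n-1\}$ with $b \equiv b_0 \pmod n$. *)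

theory Defs
  imports Main
begin

fun w3 :: "nat \<Rightarrow> nat" where
  "w3 j = (if j = 0 then 0 else j mod 3 + w3 (j div 3))"

declare w3.simps[simp del]

definition T_set :: "nat \<Rightarrow> nat \<Rightarrow> nat \<Rightarrow> nat set" where
  "T_set i1 i2 m = {j. 1 \<le> j \<and> j \<le> 3 ^ m - 2 \<and>
      (w3 j mod 4 = i1 \<or> w3 j mod 4 = i2)}"

end

theory Submission
  imports Defs
begin

text \<open>Write \<open>m = 2e + 1\<close>; as \<open>e\<close> is even, \<open>3^e = 4r + 1\<close>, and then \<open>n = 3(4r + 1)^2 - 1\<close>,
\<open>v = 6r + 1\<close> and \<open>\<delta> = 2r + 3\<close>. The key identity is \<open>2v(3^(e+1) + 1) = 3n + 2\<close>: it makes \<open>v\<close>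
(which is odd) coprime to \<open>n\<close>, and it shows that multiplication by \<open>v\<close> sends
\<open>i = a + 3^(e+1) a\<close> to \<open>a\<close> modulo \<open>n\<close> for every even \<open>a\<close>. The odd residues \<open>a < 2r\<close> are
reached from \<open>i = (s + 3^e) + 3^(e+1) s\<close> with \<open>s = a + 2r\<close>, and \<open>a = 2r + 1\<close> from
\<open>i = 1 + 2 \<cdot> 3^e\<close>. Since the digit sum is additive over non-overlapping blocks of base-3
digits and has the parity of the number, these \<open>i\<close> have digit sums \<open>2 w3 a \<equiv> 0\<close>,
\<open>2 w3 s + 1 \<equiv> 3\<close> and \<open>3\<close> modulo 4.\<close>

lemma w3_eq: "w3 j = j mod 3 + w3 (j div 3)"
  by (cases "j = 0") (simp_all add: w3.simps)

lemma w3_less_3: "j < 3 \<Longrightarrow> w3 j = j"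
  by (subst w3.simps) (simp add: w3.simps)

lemma w3_add_power_mult:
  "x < 3 ^ k \<Longrightarrow> w3 (x + 3 ^ k * y) = w3 x + w3 y"
proof (induction k arbitrary: x)
  case 0
  then show ?case by (simp add: w3_less_3)
next
  case (Suc k)
  have "(x + 3 ^ Suc k * y) mod 3 = x mod 3"
    by (simp add: mult.assoc)
  moreover have "(x + 3 ^ Suc k * y) div 3 = x div 3 + 3 ^ k * y"
    by simp
  ultimately have "w3 (x + 3 ^ Suc k * y) = x mod 3 + w3 (x div 3 + 3 ^ k * y)"
    by (subst w3_eq) simp
  also have "\<dots> = w3 x + w3 y"
    using Suc by (subst (2) w3_eq) simp
  finally show ?case .
qed

lemma even_w3_iff: "even (w3 j) \<longleftrightarrow> even j"
proof (induction j rule: less_induct)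
  case (less j)
  show ?case
  proof (cases "j = 0")
    case False
    then have "even (w3 (j div 3)) \<longleftrightarrow> even (j div 3)"
      by (intro less) simp
    moreover have "even j \<longleftrightarrow> even (j div 3 + j mod 3)"
      by presburger
    ultimately show ?thesis
      by (subst w3_eq) auto
  qed (simp add: w3_less_3)
qed

lemma w3_double_mod_4:
  assumes "x < 3 ^ k" and "even x"
  shows "w3 (x + 3 ^ k * x) mod 4 = 0"
proof -
  obtain w where "w3 x = 2 * w"
    using assms(2) even_w3_iff by blast
  then show ?thesis
    using w3_add_power_mult[OF assms(1)] by simp
qed

lemma w3_double_plus_power_mod_4:
  assumes "s < 3 ^ k" and "odd s"
  shows "w3 ((s + 3 ^ k) + 3 ^ Suc k * s) mod 4 = 3"
proof -
  have "w3 (s + 3 ^ k) = w3 s + 1"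
    using w3_add_power_mult[OF assms(1), of 1] by (simp add: w3_less_3)
  moreover have "w3 ((s + 3 ^ k) + 3 ^ Suc k * s) = w3 (s + 3 ^ k) + w3 s"
    using assms(1) by (intro w3_add_power_mult) simp
  moreover obtain w where "w3 s = 2 * w + 1"
    using assms(2) even_w3_iff oddE by metis
  ultimately show ?thesis
    by simp
qed

lemma coprime_if_mult_eq_plus_2:
  fixes v n c k :: nat
  assumes "v * c = k * n + 2" and "odd v"
  shows "coprime v n"
proof -
  have "gcd v n dvd k * n + 2"
    unfolding assms(1)[symmetric] by simp
  then have "gcd v n dvd 2"
    by (metis dvd_add_right_iff dvd_mult gcd_dvd2)
  then have "gcd v n \<le> 2"
    by (rule dvd_imp_le) simp
  moreover have "odd (gcd v n)"
    using assms(2) dvd_trans[OF _ gcd_dvd1] by blast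
  ultimately have "gcd v n = 1"
    by presburger
  then show ?thesis
    by (simp add: coprime_iff_gcd_eq_1)
qed

context
  fixes e r :: nat
  assumes power_eq: "3 ^ e = 4 * r + 1" and r_pos: "1 \<le> r"
begin

lemma modulus_eq: "3 ^ (2 * e + 1) - 1 = 48 * r\<^sup>2 + 24 * r + 2"
proof -
  have "(3::nat) ^ (2 * e + 1) = 3 * (3 ^ e)\<^sup>2"
    by (simp add: power_mult power2_eq_square[symmetric] mult.commute)
  then show ?thesis
    unfolding power_eq by (simp add: power2_eq_square algebra_simps)
qed

lemma coprime_multiplier_modulus: "coprime (6 * r + 1) (3 ^ (2 * e + 1) - 1)"
  unfolding modulus_eq
  by (rule coprime_if_mult_eq_plus_2[where c = "24 * r + 8" and k = 3])
    (simp_all add: power2_eq_square algebra_simps)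

lemma T_set_memberI:
  assumes "1 \<le> i" and "i \<le> 48 * r\<^sup>2 + 24 * r + 1"
    and "w3 i mod 4 = 0 \<or> w3 i mod 4 = 3"
  shows "i \<in> T_set 0 3 (2 * e + 1)"
  using assms modulus_eq unfolding T_set_def by auto

lemma residue_even_witness:
  assumes "even a" and "a \<le> 2 * r + 2"
  shows "((6 * r + 1) * (a * (12 * r + 4))) mod (3 ^ (2 * e + 1) - 1) = a"
proof -
  obtain b where "a = 2 * b"
    using assms(1) by blast
  then have "(6 * r + 1) * (a * (12 * r + 4)) = 3 * b * (48 * r\<^sup>2 + 24 * r + 2) + a"
    by (simp add: power2_eq_square algebra_simps)
  moreover have "a < 48 * r\<^sup>2 + 24 * r + 2"
    using assms(2) r_pos by linarith
  ultimately show ?thesis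
    unfolding modulus_eq by (metis mod_mult_self3 mod_less)
qed

lemma even_witness_in_T_set:
  assumes "even a" and "1 \<le> a" and "a \<le> 2 * r + 2"
  shows "a * (12 * r + 4) \<in> T_set 0 3 (2 * e + 1)"
proof (rule T_set_memberI)
  have "a * (12 * r + 4) = a + 3 ^ Suc e * a"
    using power_eq by (simp add: algebra_simps)
  moreover have "a < 3 ^ Suc e"
    using assms(3) power_eq by simp
  ultimately show "w3 (a * (12 * r + 4)) mod 4 = 0 \<or> w3 (a * (12 * r + 4)) mod 4 = 3"
    using w3_double_mod_4 assms(1) by presburger
  have "a * (12 * r + 4) \<le> (2 * r + 2) * (12 * r + 4)"
    using assms(3) by (rule mult_le_mono1)
  moreover have "(2 * r + 2) * (12 * r + 4) = 24 * r\<^sup>2 + 32 * r + 8"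
    by (simp add: power2_eq_square algebra_simps)
  moreover have "r \<le> r\<^sup>2"
    using r_pos by (simp add: power2_eq_square)
  ultimately show "a * (12 * r + 4) \<le> 48 * r\<^sup>2 + 24 * r + 1"
    using r_pos by linarith
  show "1 \<le> a * (12 * r + 4)"
    using assms(2) by simp
qed

lemma residue_odd_witness:
  assumes "odd a" and "a < 2 * r"
  shows "((6 * r + 1) * ((a + 2 * r) * (12 * r + 4) + 4 * r + 1)) mod (3 ^ (2 * e + 1) - 1) = a"
proof -
  obtain t where "a + 2 * r = 2 * t + 1"
    using assms(1) by (metis oddE odd_add even_mult_iff even_numeral)
  then have "(6 * r + 1) * ((a + 2 * r) * (12 * r + 4) + 4 * r + 1) + 2 * r
      = (3 * t + 2) * (48 * r\<^sup>2 + 24 * r + 2) + (a + 2 * r)"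
    by (simp add: power2_eq_square algebra_simps)
  then have "(6 * r + 1) * ((a + 2 * r) * (12 * r + 4) + 4 * r + 1)
      = (3 * t + 2) * (48 * r\<^sup>2 + 24 * r + 2) + a"
    by linarith
  moreover have "a < 48 * r\<^sup>2 + 24 * r + 2"
    using assms(2) by linarith
  ultimately show ?thesis
    unfolding modulus_eq by (metis mod_mult_self3 mod_less)
qed

lemma odd_witness_in_T_set:
  assumes "odd a" and "a < 2 * r"
  shows "(a + 2 * r) * (12 * r + 4) + 4 * r + 1 \<in> T_set 0 3 (2 * e + 1)"
proof (rule T_set_memberI)
  let ?s = "a + 2 * r"
  have "?s * (12 * r + 4) + 4 * r + 1 = (?s + 3 ^ e) + 3 ^ Suc e * ?s"
    using power_eq by (simp add: algebra_simps)
  moreover have "?s < 3 ^ e" and "odd ?s"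
    using assms power_eq by simp_all
  ultimately show "w3 (?s * (12 * r + 4) + 4 * r + 1) mod 4 = 0
      \<or> w3 (?s * (12 * r + 4) + 4 * r + 1) mod 4 = 3"
    using w3_double_plus_power_mod_4 by presburger
  have "(?s + 1) * (12 * r + 4) \<le> (4 * r) * (12 * r + 4)"
    using assms(2) by (intro mult_le_mono1) simp
  then show "?s * (12 * r + 4) + 4 * r + 1 \<le> 48 * r\<^sup>2 + 24 * r + 1"
    by (simp add: power2_eq_square algebra_simps)
qed simp

lemma residue_middle_witness: "((6 * r + 1) * (8 * r + 3)) mod (3 ^ (2 * e + 1) - 1) = 2 * r + 1"
proof -
  have "(6 * r + 1) * (8 * r + 3) = 1 * (48 * r\<^sup>2 + 24 * r + 2) + (2 * r + 1)"
    by (simp add: power2_eq_square algebra_simps)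
  moreover have "2 * r + 1 < 48 * r\<^sup>2 + 24 * r + 2"
    by simp
  ultimately show ?thesis
    unfolding modulus_eq by (metis mod_mult_self3 mod_less)
qed

lemma middle_witness_in_T_set: "8 * r + 3 \<in> T_set 0 3 (2 * e + 1)"
proof (rule T_set_memberI)
  have "(1::nat) < 3 ^ e"
    using power_eq r_pos by simp
  then have "w3 (1 + 3 ^ e * 2) = w3 1 + w3 2"
    by (rule w3_add_power_mult)
  moreover have "1 + 3 ^ e * 2 = 8 * r + 3"
    using power_eq by simp
  ultimately have "w3 (8 * r + 3) = w3 1 + w3 2"
    by metis
  then show "w3 (8 * r + 3) mod 4 = 0 \<or> w3 (8 * r + 3) mod 4 = 3"
    by (simp add: w3_less_3)
  show "8 * r + 3 \<le> 48 * r\<^sup>2 + 24 * r + 1"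
    using r_pos by (simp add: power2_eq_square)
qed simp

lemma small_residues_covered:
  "{1..2 * r + 2} \<subseteq> (\<lambda>i. ((6 * r + 1) * i) mod (3 ^ (2 * e + 1) - 1)) ` T_set 0 3 (2 * e + 1)"
  (is "_ \<subseteq> ?image")
proof
  fix a
  assume "a \<in> {1..2 * r + 2}"
  then have a: "1 \<le> a" "a \<le> 2 * r + 2"
    by simp_all
  moreover have "even a \<or> a = 2 * r + 1 \<or> odd a \<and> a < 2 * r"
    using a(2) by presburger
  ultimately consider "even a" | "a = 2 * r + 1" | "odd a" "a < 2 * r"
    by blast
  then show "a \<in> ?image"
  proof cases
    case 1
    show ?thesis
      by (rule image_eqI)
        (rule residue_even_witness[OF 1 a(2), symmetric], rule even_witness_in_T_set[OF 1 a])
  next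
    case 2
    show ?thesis
      unfolding 2 by (rule image_eqI)
        (rule residue_middle_witness[symmetric], rule middle_witness_in_T_set)
  next
    case 3
    show ?thesis
      by (rule image_eqI)
        (rule residue_odd_witness[OF 3, symmetric], rule odd_witness_in_T_set[OF 3])
  qed
qed

end

theorem lemma1:
  fixes m :: nat
  assumes "m mod 4 = 1" and "m \<ge> 5"
  defines "n \<equiv> 3 ^ m - 1"
      and "v \<equiv> (3 ^ ((m + 1) div 2) - 1) div 2"
      and "\<delta> \<equiv> (3 ^ ((m - 1) div 2) + 5) div 2"
  shows "gcd v n = 1 \<and> {1..<\<delta>} \<subseteq> (\<lambda>i. (v * i) mod n) ` T_set 0 3 m"
proof -
  define k where "k = m div 4"
  have m: "m = 2 * (2 * k) + 1"
    using assms(1) unfolding k_def by presburger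
  have "(3::nat) ^ (2 * k) mod 4 = 1"
    by (simp add: power_mult power_mod[of 9 4 k, symmetric])
  then obtain r where power_eq: "(3::nat) ^ (2 * k) = 4 * r + 1"
    using mult_div_mod_eq[of 4 "(3::nat) ^ (2 * k)"] by metis
  have "k \<noteq> 0"
    using assms(2) m by auto
  then have r_pos: "1 \<le> r"
    using power_eq by (cases r) auto
  have "v = 6 * r + 1"
    unfolding v_def m using power_eq by simp
  moreover have "{1..<\<delta>} = {1..2 * r + 2}"
    unfolding \<delta>_def m using power_eq by auto
  ultimately show ?thesis
    using coprime_multiplier_modulus[OF power_eq r_pos] small_residues_covered[OF power_eq r_pos]
    unfolding n_def m by (simp add: coprime_iff_gcd_eq_1)
qed

end
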